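(* Let $q=2^{4n+2}$ with $n\ge0$ an integer. Then there exists a linear code over $\mathbb{F}_q$ with parameters $[(\sqrt q-1)(q+1),5,d]_q$ where $d\ge (\sqrt q-1)(q+1)-(2q+2+20\sqrt q)=(\sqrt q-3)q-19\sqrt q-3$. Specifically, with $\xi\in\mathbb{F}_q$ a root of $T^2+T+1$, $\Omega^*=\bigcup_{z\in\mathbb{F}_{\sqrt q}^*}\{(x,y)\in AG(2,q): x^2+xy+\xi y^2=z\}$ and $\mathcal{V}=\langle X,Y,X^2,XY,Y^2\rangle_{\mathbb{F}_q}$, the functional code $\mathcal{C}_{\mathcal{V}}(\Omega^* )$ has these parameters. *)

theory Defs
  imports "HOL-Library.Cardinality"
begin

definition subfield_of_order :: "nat \<Rightarrow> 'a::field set" where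
  "subfield_of_order s = {z. z ^ s = z}"

definition Omega_star :: "nat \<Rightarrow> 'a::field \<Rightarrow> ('a \<times> 'a) set" where
  "Omega_star s xi =
     (\<Union>z\<in>subfield_of_order s - {0}. {(x, y). x^2 + x*y + xi*y^2 = z})"

definition functional_code :: "('a::field \<times> 'a) set \<Rightarrow> ('a \<times> 'a \<Rightarrow> 'a) set" where
  "functional_code \<Omega> =
     {(\<lambda>P. if P \<in> \<Omega> then
              a1 * fst P + a2 * snd P + a3 * (fst P)^2 + a4 * (fst P * snd P) + a5 * (snd P)^2
            else 0) | a1 a2 a3 a4 a5. True}"

definition hweight :: "('a \<times> 'a) set \<Rightarrow> ('a \<times> 'a \<Rightarrow> 'a::zero) \<Rightarrow> nat" where
  "hweight \<Omega> w = card {P \<in> \<Omega>. w P \<noteq> 0}"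

definition min_distance :: "('a \<times> 'a) set \<Rightarrow> ('a \<times> 'a \<Rightarrow> 'a::zero) set \<Rightarrow> nat" where
  "min_distance \<Omega> C = Min (hweight \<Omega> ` (C - {\<lambda>_. 0}))"

end

(* Since q = 4^(2n+1), the polynomial T^2 + T + xi has no root in F_q: a root t would satisfy
   t^4 = t + 1 and hence t^q = t + 1. So x^2 + xy + xi y^2 is anisotropic, and in characteristic 2
   every nonzero value is a square, so all its nonzero level sets are conics of the same size, which
   counting the punctured plane shows to be q + 1; Omega* is the union of sqrt q - 1 of them.
   A nonzero element of V is, for each fixed y, a polynomial of degree at most 2 in x, hence has at
   most 2q zeros in AG(2,q). This gives d >= |Omega*| - 2q, which is stronger than the bound claimed.
   Evaluation on Omega* is injective already on the conic of level 1: the translation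
   (x,y) -> (x+y,y) preserves it in characteristic 2, and comparing values at paired points forces
   all five coefficients to vanish. *)

theory Submission
  imports Defs "HOL-Number_Theory.Residues" "HOL-Computational_Algebra.Polynomial"
    "HOL-Library.Product_Plus"
begin

section \<open>Counting and roots of polynomials\<close>

lemma card_le_mult_card_image:
  assumes "finite A" and fibres: "\<And>y. card {a \<in> A. f a = y} \<le> k"
  shows "card A \<le> k * card (f ` A)"
proof -
  have "card A = card (\<Union>y \<in> f ` A. {a \<in> A. f a = y})"
    by (rule arg_cong[where f = card]) auto
  also have "\<dots> \<le> (\<Sum>y \<in> f ` A. card {a \<in> A. f a = y})"
    using \<open>finite A\<close> by (intro card_UN_le) simp
  also have "\<dots> \<le> (\<Sum>y \<in> f ` A. k)"
    by (rule sum_mono) (rule fibres)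
  finally show ?thesis
    by (simp add: mult.commute)
qed

lemma card_eq_sum_card_fibres:
  fixes Q :: "'a \<times> 'b::finite \<Rightarrow> bool"
  assumes "finite {P. Q P}"
  shows "card {P. Q P} = (\<Sum>y \<in> UNIV. card {x. Q (x, y)})"
proof -
  have "card {P. Q P} = card (\<Union>y. (\<lambda>x. (x, y)) ` {x. Q (x, y)})"
    by (rule arg_cong[where f = card]) auto
  moreover have "finite {x. Q (x, y)}" for y
    by (rule finite_subset[of _ "fst ` {P. Q P}"]) (force, simp add: assms)
  ultimately show ?thesis
    by (subst (asm) card_UN_disjoint) (auto simp: card_image inj_on_def)
qed

lemma poly_quadratic: "poly [:c0, c1, c2:] x = c0 + c1 * x + c2 * (x::'a::comm_ring_1)^2"
  by (simp add: algebra_simps power2_eq_square)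

lemma card_roots_linear_le:
  fixes c0 c1 :: "'a::field"
  assumes "c0 \<noteq> 0 \<or> c1 \<noteq> 0"
  shows "card {x. c0 + c1 * x = 0} \<le> 1"
proof -
  have "[:c0, c1:] \<noteq> 0"
    using assms by simp
  then have "card {x. poly [:c0, c1:] x = 0} \<le> degree [:c0, c1:]"
    by (rule card_poly_roots_bound)
  then show ?thesis
    by (simp add: mult.commute split: if_split_asm)
qed

lemma card_roots_quadratic_le:
  fixes c0 c1 c2 :: "'a::field"
  assumes "c0 \<noteq> 0 \<or> c1 \<noteq> 0 \<or> c2 \<noteq> 0"
  shows "card {x. c0 + c1 * x + c2 * x^2 = 0} \<le> 2"
proof -
  have "[:c0, c1, c2:] \<noteq> 0"
    using assms by simp
  then have "card {x. poly [:c0, c1, c2:] x = 0} \<le> degree [:c0, c1, c2:]"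
    by (rule card_poly_roots_bound)
  moreover have "degree [:c0, c1, c2:] \<le> 2"
    by (simp add: degree_pCons_eq_if)
  ultimately show ?thesis
    unfolding poly_quadratic by linarith
qed

lemma quadratic_eq_0_if_three_roots:
  fixes c0 c1 c2 :: "'a::field"
  assumes "card Y \<ge> 3" and roots: "\<And>y. y \<in> Y \<Longrightarrow> c0 + c1 * y + c2 * y^2 = 0"
  shows "c0 = 0 \<and> c1 = 0 \<and> c2 = 0"
proof (rule ccontr)
  assume nonzero: "\<not> (c0 = 0 \<and> c1 = 0 \<and> c2 = 0)"
  then have "[:c0, c1, c2:] \<noteq> 0"
    by simp
  then have "finite {y. c0 + c1 * y + c2 * y^2 = 0}"
    by (rule poly_roots_finite[of "[:c0, c1, c2:]", unfolded poly_quadratic])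
  moreover have "Y \<subseteq> {y. c0 + c1 * y + c2 * y^2 = 0}"
    using roots by blast
  ultimately have "card Y \<le> card {y. c0 + c1 * y + c2 * y^2 = 0}"
    by (rule card_mono)
  also have "\<dots> \<le> 2"
    using nonzero by (intro card_roots_quadratic_le) auto
  finally show False
    using \<open>card Y \<ge> 3\<close> by simp
qed

lemma sum_card_roots_affine_le:
  fixes B C :: "'b::finite \<Rightarrow> 'a::{finite,field}"
  shows "(\<Sum>y \<in> UNIV. card {x. C y + B y * x = 0})
    \<le> card {y. B y \<noteq> 0} + CARD('a) * card {y. B y = 0 \<and> C y = 0}"
proof -
  have "card {x. C y + B y * x = 0}
      \<le> (if B y \<noteq> 0 then 1 else 0) + (if B y = 0 \<and> C y = 0 then CARD('a) else 0)" for y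
    using card_roots_linear_le[of "C y" "B y"] by (cases "C y = 0") auto
  then have "(\<Sum>y \<in> UNIV. card {x. C y + B y * x = 0})
      \<le> (\<Sum>y \<in> UNIV. (if B y \<noteq> 0 then 1 else 0) + (if B y = 0 \<and> C y = 0 then CARD('a) else 0))"
    by (intro sum_mono)
  also have "\<dots> = card {y. B y \<noteq> 0} + CARD('a) * card {y. B y = 0 \<and> C y = 0}"
    by (simp add: sum.distrib sum.If_cases Int_def)
  finally show ?thesis .
qed

lemma card_fixed_points_power_le:
  assumes "s \<ge> 2"
  shows "card {z::'a::field. z ^ s = z} \<le> s"
proof -
  define p :: "'a poly" where "p = monom 1 s - [:0, 1:]"
  have "coeff p s = 1"
    using assms by (simp add: p_def coeff_monom coeff_pCons split: nat.split)
  then have "p \<noteq> 0"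
    by auto
  moreover have "degree p \<le> s"
    using assms by (auto simp: p_def degree_monom_eq intro: degree_diff_le)
  moreover have "{z. z ^ s = z} = {z. poly p z = 0}"
    by (simp add: p_def poly_monom)
  ultimately show ?thesis
    using card_poly_roots_bound[of p] by simp
qed

section \<open>Finite fields of characteristic 2\<close>

lemma CHAR_eq_2_if_card_power_2:
  assumes "CARD('a::{finite,field}) = 2 ^ m"
  shows "CHAR('a) = 2"
proof -
  have "prime CHAR('a)"
    by (simp add: finite_imp_CHAR_pos prime_CHAR_semidom)
  moreover have "CHAR('a) dvd 2 ^ m"
    using CHAR_dvd_CARD[where 'a='a] assms by simp
  ultimately show ?thesis
    by (meson prime_dvd_power primes_dvd_imp_eq two_is_prime_nat)
qed

lemma two_eq_zero_if_CHAR_2: "CHAR('a::ring_1) = 2 \<Longrightarrow> (2::'a) = 0"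
  by (metis of_nat_CHAR of_nat_numeral)

lemma add_self_eq_0_CHAR_2: "CHAR('a::ring_1) = 2 \<Longrightarrow> x + x = (0::'a)"
  by (metis add_eq_0_iff uminus_CHAR_2)

lemma add_eq_0_iff_eq_CHAR_2: "CHAR('a::ring_1) = 2 \<Longrightarrow> a + b = 0 \<longleftrightarrow> a = (b::'a)"
  by (metis add_eq_0_iff uminus_CHAR_2)

lemma power_card_eq_self:
  fixes x :: "'a::{finite,field}"
  shows "x ^ CARD('a) = x"
proof (cases "x = 0")
  case True
  then show ?thesis by simp
next
  case False
  have "(\<Prod>y\<in>-{0}. x * y) = (\<Prod>y\<in>-{0}. y)"
    by (rule prod.reindex_bij_witness[of _ "\<lambda>y. y / x" "\<lambda>y. x * y"]) (use False in auto)
  moreover have "card (-{0::'a}) = CARD('a) - 1"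
    by (simp add: Compl_eq_Diff_UNIV card_Diff_singleton)
  ultimately have "x ^ (CARD('a) - 1) * (\<Prod>y\<in>-{0}. y) = (\<Prod>y\<in>-{0::'a}. y)"
    by (simp add: prod.distrib)
  then have "x ^ (CARD('a) - 1) = 1"
    by simp
  moreover have "CARD('a) = Suc (CARD('a) - 1)"
    by simp
  ultimately show ?thesis
    by (metis mult.right_neutral power_Suc)
qed

lemma exists_square_root_CHAR_2:
  fixes z :: "'a::{finite,field}"
  assumes "CHAR('a) = 2"
  shows "\<exists>t. t^2 = z"
proof -
  have "inj (\<lambda>t::'a. t^2)"
  proof (rule injI)
    fix t u :: 'a
    assume "t^2 = u^2"
    then have "(t - u)^2 = 0"
      using freshmans_dream'[where x=t and y="-u" and n=1] assms
      by (simp add: minus_CHAR_2 two_eq_zero_if_CHAR_2)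
    then show "t = u" by simp
  qed
  then show ?thesis
    by (metis finite_UNIV_inj_surj finite_class.finite_UNIV surjD)
qed

text \<open>The trace map \<open>z \<mapsto> z^s + z\<close> is additive, vanishes exactly on the subfield \<open>K\<close> and maps
  into \<open>K\<close>; hence \<open>z \<mapsto> (tr z, z + r (tr z))\<close>, with \<open>r\<close> a right inverse of the trace, embeds
  the field into \<open>K \<times> K\<close>.\<close>
lemma card_subfield_of_order:
  fixes k :: nat
  assumes char: "CHAR('a::{finite,field}) = 2" and card: "CARD('a) = 2 ^ k * 2 ^ k"
  shows "card (subfield_of_order (2 ^ k) :: 'a set) = 2 ^ k"
proof -
  define s :: nat where "s = 2 ^ k"
  define K :: "'a set" where "K = subfield_of_order s"
  define tr :: "'a \<Rightarrow> 'a" where "tr z = z ^ s + z" for z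
  have "card {0, 1::'a} \<le> CARD('a)"
    by (rule card_mono) auto
  then have "k \<noteq> 0"
    using card by (cases k) auto
  then have "s \<ge> 2"
    by (cases k) (simp_all add: s_def)
  then have card_K_le: "card K \<le> s"
    using card_fixed_points_power_le by (simp add: K_def subfield_of_order_def)
  have tr_add: "tr (a + b) = tr a + tr b" for a b
    using freshmans_dream'[where x=a and y=b and n=k] char by (simp add: tr_def s_def algebra_simps)
  have K_eq: "K = {z. tr z = 0}"
    by (simp add: K_def subfield_of_order_def tr_def add_eq_0_iff_eq_CHAR_2[OF char])
  have tr_in_K: "tr z \<in> K" for z
  proof -
    have "(z ^ s) ^ s = z"
      using power_card_eq_self[of z] card by (simp add: s_def flip: power_mult)
    then have "tr (tr z) = (z + z) + (z ^ s + z ^ s)"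
      using tr_add by (simp add: tr_def algebra_simps)
    then show ?thesis
      by (simp add: K_eq add_self_eq_0_CHAR_2[OF char])
  qed
  define r where "r w = (SOME z. tr z = w)" for w
  have tr_r: "tr (r (tr z)) = tr z" for z
    unfolding r_def by (rule someI) auto
  define g where "g z = (tr z, z + r (tr z))" for z
  have "inj g"
    by (rule injI) (metis g_def add_right_cancel prod.inject)
  moreover have "range g \<subseteq> K \<times> K"
    using tr_in_K tr_add tr_r by (auto simp: g_def K_eq add_self_eq_0_CHAR_2[OF char])
  ultimately have "s * s \<le> card K * card K"
    using card card_mono[of "K \<times> K" "range g"]
    by (simp add: s_def card_image card_cartesian_product)
  moreover have "card K * card K < s * s" if "card K < s"
    using that by (simp add: mult_strict_mono)
  ultimately have "card K = s"
    using card_K_le by fastforce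
  then show ?thesis
    by (simp add: K_def s_def)
qed

lemma power_four_power_CHAR_2:
  fixes t :: "'a::field"
  assumes char: "CHAR('a) = 2" and t4: "t ^ 4 = t + 1"
  shows "t ^ (4 ^ m) = (if even m then t else t + 1)"
proof (induction m)
  case 0
  then show ?case by simp
next
  case (Suc m)
  have "t ^ (4 ^ Suc m) = (t ^ (4 ^ m)) ^ 4"
    by (simp add: mult.commute flip: power_mult)
  also have "(t + 1) ^ 4 = t ^ 4 + 1"
    using freshmans_dream'[where x=t and y=1 and n=2] char by simp
  ultimately show ?case
    using Suc t4 by (simp add: add.assoc add_self_eq_0_CHAR_2[OF char])
qed

lemma no_root_of_T2_T_xi:
  fixes xi :: "'a::{finite,field}"
  assumes q: "CARD('a) = 2 ^ (4 * n + 2)" and xi: "xi^2 + xi + 1 = 0"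
  shows "t^2 + t + xi \<noteq> 0"
proof
  assume t: "t^2 + t + xi = 0"
  have char: "CHAR('a) = 2"
    using q by (rule CHAR_eq_2_if_card_power_2)
  have t2: "t^2 = t + xi" and xi2: "xi^2 = xi + 1"
    using t xi by (simp_all add: add.assoc add_eq_0_iff_eq_CHAR_2[OF char])
  have "t ^ 4 = (t + xi) ^ 2"
    by (simp flip: t2 power_mult)
  also have "\<dots> = t^2 + xi^2"
    using freshmans_dream'[where x=t and y=xi and n=1] char by simp
  also have "\<dots> = t + 1 + (xi + xi)"
    by (simp add: t2 xi2 algebra_simps)
  also have "\<dots> = t + 1"
    by (simp add: add_self_eq_0_CHAR_2[OF char])
  finally have "t ^ (4 ^ (2 * n + 1)) = (if even (2 * n + 1) then t else t + 1)"
    by (rule power_four_power_CHAR_2[OF char])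
  moreover have "(4::nat) ^ (2 * n + 1) = CARD('a)"
    using power_mult[of "2::nat" 2 "2 * n + 1"] by (simp add: q)
  ultimately show False
    using power_card_eq_self[of t] by (simp del: power_Suc)
qed

section \<open>The conics x^2 + xy + xi y^2 = w\<close>

definition conic :: "'a::field \<Rightarrow> 'a \<Rightarrow> ('a \<times> 'a) set" where
  "conic xi w = {(x, y). x^2 + x*y + xi*y^2 = w}"

lemma Omega_star_eq_Union_conic:
  "Omega_star s xi = (\<Union>w \<in> subfield_of_order s - {0}. conic xi w)"
  by (simp add: Omega_star_def conic_def)

lemma conic_0_eq_if_no_root:
  fixes xi :: "'a::field"
  assumes "\<And>t. t^2 + t + xi \<noteq> 0"
  shows "conic xi 0 = {(0, 0)}"
proof -
  have y0: "y = 0" if "x^2 + x*y + xi*y^2 = 0" for x y :: 'a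
  proof (rule ccontr)
    assume "y \<noteq> 0"
    then have "((x/y)^2 + x/y + xi) * y^2 = x^2 + x*y + xi*y^2"
      by (simp add: field_simps power2_eq_square)
    then show False
      using assms[of "x/y"] that \<open>y \<noteq> 0\<close> by simp
  qed
  have "x^2 + x*y + xi*y^2 = 0 \<longleftrightarrow> x = 0 \<and> y = 0" for x y :: 'a
    using y0[of x y] by auto
  then show ?thesis
    by (auto simp: conic_def)
qed

lemma scale_conic:
  fixes t :: "'a::field"
  assumes "t \<noteq> 0"
  shows "(\<lambda>(x, y). (t*x, t*y)) ` conic xi w = conic xi (t^2 * w)"
proof -
  have eq: "(t*x)^2 + (t*x)*(t*y) + xi*(t*y)^2 = t^2 * (x^2 + x*y + xi*y^2)" for x y
    by (simp add: algebra_simps power2_eq_square)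
  show ?thesis
  proof (intro equalityI subsetI)
    fix P
    assume "P \<in> conic xi (t^2 * w)"
    then obtain x y where P: "P = (x, y)" and "x^2 + x*y + xi*y^2 = t^2 * w"
      by (auto simp: conic_def)
    then have "(x/t, y/t) \<in> conic xi w"
      using eq[of "x/t" "y/t"] assms by (simp add: conic_def)
    then show "P \<in> (\<lambda>(x, y). (t*x, t*y)) ` conic xi w"
      using assms by (force simp: P)
  qed (use eq in \<open>auto simp: conic_def\<close>)
qed

lemma card_conic:
  fixes xi :: "'a::{finite,field}"
  assumes char: "CHAR('a) = 2" and aniso: "conic xi 0 = {(0, 0)}" and "w \<noteq> 0"
  shows "card (conic xi w) = CARD('a) + 1"
proof -
  define q where "q = CARD('a)"
  have same_card: "card (conic xi v) = card (conic xi 1)" if "v \<noteq> 0" for v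
  proof -
    obtain t where t: "t^2 = v"
      using exists_square_root_CHAR_2[OF char] by blast
    with that have "t \<noteq> 0"
      by auto
    then have "inj (\<lambda>(x, y). (t*x, t*y))"
      by (auto intro!: injI)
    then have "card (conic xi (t^2 * 1)) = card (conic xi 1)"
      using scale_conic[OF \<open>t \<noteq> 0\<close>] by (metis card_image inj_on_subset subset_UNIV)
    with t show ?thesis
      by simp
  qed
  have "card {0, 1::'a} \<le> q"
    unfolding q_def by (rule card_mono) auto
  then have "q - 1 \<noteq> 0"
    by simp
  have punctured_plane: "-{(0, 0)} = (\<Union>v \<in> -{0}. conic xi v)"
    using aniso by (auto simp: conic_def)
  have "(q - 1) * (q + 1) = card (-{(0::'a, 0::'a)})"
    using \<open>q - 1 \<noteq> 0\<close>
    by (cases q) (simp_all add: Compl_eq_Diff_UNIV card_Diff_singleton q_def)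
  also have "\<dots> = (\<Sum>v \<in> -{0}. card (conic xi v))"
    unfolding punctured_plane
    by (rule card_UN_disjoint) (auto simp: conic_def)
  also have "\<dots> = (\<Sum>v \<in> -{0::'a}. card (conic xi 1))"
    by (rule sum.cong[OF refl], rule same_card) simp
  also have "\<dots> = (q - 1) * card (conic xi 1)"
    by (simp add: q_def Compl_eq_Diff_UNIV card_Diff_singleton)
  finally have "card (conic xi 1) = q + 1"
    unfolding mult_left_cancel[OF \<open>q - 1 \<noteq> 0\<close>] by (rule sym)
  then show ?thesis
    using same_card[OF \<open>w \<noteq> 0\<close>] by (simp add: q_def)
qed

lemma card_Omega_star:
  fixes xi :: "'a::{finite,field}"
  assumes char: "CHAR('a) = 2" and card: "CARD('a) = 2 ^ k * 2 ^ k"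
    and aniso: "conic xi 0 = {(0, 0)}"
  shows "card (Omega_star (2 ^ k) xi) = (2 ^ k - 1) * (CARD('a) + 1)"
proof -
  define K :: "'a set" where "K = subfield_of_order (2 ^ k)"
  have "card (Omega_star (2 ^ k) xi) = (\<Sum>w \<in> K - {0}. card (conic xi w))"
    unfolding Omega_star_eq_Union_conic K_def
    by (rule card_UN_disjoint) (auto simp: conic_def)
  also have "\<dots> = (card K - 1) * (CARD('a) + 1)"
    by (simp add: card_conic[OF char aniso] K_def subfield_of_order_def)
  finally show ?thesis
    using card_subfield_of_order[OF char card] by (simp add: K_def)
qed

lemma card_conic_fibre_le:
  fixes xi :: "'a::field"
  shows "card {P \<in> conic xi w. snd P = y} \<le> 2"
proof -
  have "{P \<in> conic xi w. snd P = y} = (\<lambda>x. (x, y)) ` {x. (xi * y^2 - w) + y * x + 1 * x^2 = 0}"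
    by (auto simp: conic_def algebra_simps)
  then show ?thesis
    using card_roots_quadratic_le[of "xi * y^2 - w" y 1] by (simp add: card_image inj_on_def)
qed

lemma translate_conic_CHAR_2:
  fixes xi :: "'a::field"
  assumes "CHAR('a) = 2" and "(x, y) \<in> conic xi w"
  shows "(x + y, y) \<in> conic xi w"
proof -
  have "(x + y)^2 + (x + y) * y + xi * y^2 = (x^2 + x * y + xi * y^2) + 2 * (x * y + y^2)"
    by (simp add: algebra_simps power2_eq_square)
  then show ?thesis
    using assms by (simp add: conic_def two_eq_zero_if_CHAR_2)
qed

section \<open>The code\<close>

definition V_eval :: "'a \<times> 'a \<times> 'a \<times> 'a \<times> 'a \<Rightarrow> 'a \<times> 'a \<Rightarrow> 'a::field" where
  "V_eval = (\<lambda>(a1, a2, a3, a4, a5) (x, y). a1 * x + a2 * y + a3 * x^2 + a4 * (x * y) + a5 * y^2)"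

lemma V_eval_simps [simp]:
  "V_eval (a1, a2, a3, a4, a5) (x, y) = a1 * x + a2 * y + a3 * x^2 + a4 * (x * y) + a5 * y^2"
  by (simp add: V_eval_def)

lemma V_eval_diff: "V_eval (a - b) P = V_eval a P - V_eval b P"
  by (cases a rule: prod_cases5, cases b rule: prod_cases5, cases P) (simp add: algebra_simps)

definition codeword :: "('a \<times> 'a) set \<Rightarrow> 'a \<times> 'a \<times> 'a \<times> 'a \<times> 'a \<Rightarrow> 'a \<times> 'a \<Rightarrow> 'a::field" where
  "codeword \<Omega> a = (\<lambda>P. if P \<in> \<Omega> then V_eval a P else 0)"

lemma codeword_0: "codeword \<Omega> 0 = (\<lambda>_. 0)"
  by (auto simp: codeword_def zero_prod_def)

lemma functional_code_eq_range_codeword: "functional_code \<Omega> = range (codeword \<Omega>)"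
proof -
  have codeword: "codeword \<Omega> (a1, a2, a3, a4, a5) = (\<lambda>P. if P \<in> \<Omega> then
      a1 * fst P + a2 * snd P + a3 * (fst P)^2 + a4 * (fst P * snd P) + a5 * (snd P)^2 else 0)"
    for a1 a2 a3 a4 a5
    by (auto simp: codeword_def fun_eq_iff split: prod.split)
  show ?thesis
  proof (intro equalityI subsetI)
    fix w
    assume "w \<in> functional_code \<Omega>"
    then obtain a1 a2 a3 a4 a5 where "w = (\<lambda>P. if P \<in> \<Omega> then
      a1 * fst P + a2 * snd P + a3 * (fst P)^2 + a4 * (fst P * snd P) + a5 * (snd P)^2 else 0)"
      unfolding functional_code_def by blast
    then have "w = codeword \<Omega> (a1, a2, a3, a4, a5)"
      by (simp only: codeword)
    then show "w \<in> range (codeword \<Omega>)"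
      by blast
  next
    fix w
    assume "w \<in> range (codeword \<Omega>)"
    then obtain a1 a2 a3 a4 a5 where "w = codeword \<Omega> (a1, a2, a3, a4, a5)"
      by (metis prod_cases5 rangeE)
    then show "w \<in> functional_code \<Omega>"
      unfolding functional_code_def codeword by blast
  qed
qed

lemma V_eval_translate_CHAR_2:
  fixes x y :: "'a::field"
  assumes "CHAR('a) = 2"
  shows "V_eval (a1, a2, a3, a4, a5) (x + y, y)
    = V_eval (a1, a2, a3, a4, a5) (x, y) + y * (a1 + (a3 + a4) * y)"
proof -
  have "V_eval (a1, a2, a3, a4, a5) (x + y, y)
      = V_eval (a1, a2, a3, a4, a5) (x, y) + y * (a1 + (a3 + a4) * y) + (a3 * x * y + a3 * x * y)"
    by (simp add: algebra_simps power2_eq_square)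
  then show ?thesis
    by (simp add: add_self_eq_0_CHAR_2[OF assms])
qed

lemma V_eval_vanishing_on_conic_eq_0:
  fixes xi :: "'a::field"
  assumes char: "CHAR('a) = 2" and card: "card (conic xi 1) \<ge> 5"
    and vanish: "\<And>P. P \<in> conic xi 1 \<Longrightarrow> V_eval a P = 0"
  shows "a = 0"
proof -
  obtain a1 a2 a3 a4 a5 where a: "a = (a1, a2, a3, a4, a5)"
    by (cases a rule: prod_cases5)
  define Y where "Y = snd ` conic xi 1"
  have "finite (conic xi 1)"
    using card card.infinite by fastforce
  then have "5 \<le> 2 * card Y"
    using card card_le_mult_card_image[OF _ card_conic_fibre_le] by (fastforce simp: Y_def)
  then have card_Y: "card Y \<ge> 3"
    by simp
  have "0 + a1 * y + (a3 + a4) * y^2 = 0" if "y \<in> Y" for y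
  proof -
    obtain x where P: "(x, y) \<in> conic xi 1"
      using \<open>y \<in> Y\<close> by (auto simp: Y_def)
    then have "V_eval a (x + y, y) = 0" and "V_eval a (x, y) = 0"
      using vanish translate_conic_CHAR_2[OF char] by blast+
    then have "y * (a1 + (a3 + a4) * y) = 0"
      using V_eval_translate_CHAR_2[OF char, of a1 a2 a3 a4 a5 x y] unfolding a by (simp del: V_eval_simps)
    then show ?thesis
      by (simp add: algebra_simps power2_eq_square)
  qed
  then have "(0::'a) = 0 \<and> a1 = 0 \<and> a3 + a4 = 0"
    by (rule quadratic_eq_0_if_three_roots[OF card_Y])
  then have a1: "a1 = 0" and a4: "a4 = a3"
    by (simp_all add: add_eq_0_iff_eq_CHAR_2[OF char])
  have "a3 + a2 * y + (a5 - a3 * xi) * y^2 = 0" if "y \<in> Y" for y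
  proof -
    obtain x where P: "(x, y) \<in> conic xi 1"
      using \<open>y \<in> Y\<close> by (auto simp: Y_def)
    then have "a3 + a2 * y + (a5 - a3 * xi) * y^2
        = a3 * (x^2 + x * y + xi * y^2) + a2 * y + (a5 - a3 * xi) * y^2"
      by (simp add: conic_def)
    also have "\<dots> = V_eval a (x, y)"
      by (simp add: a a1 a4 algebra_simps)
    finally show ?thesis
      using vanish[OF P] by simp
  qed
  then have "a3 = 0 \<and> a2 = 0 \<and> a5 - a3 * xi = 0"
    by (rule quadratic_eq_0_if_three_roots[OF card_Y])
  then show ?thesis
    by (simp add: a a1 a4 zero_prod_def)
qed

lemma inj_codeword:
  fixes xi :: "'a::field"
  assumes char: "CHAR('a) = 2" and card: "card (conic xi 1) \<ge> 5" and "conic xi 1 \<subseteq> \<Omega>"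
  shows "inj (codeword \<Omega>)"
proof (rule injI)
  fix a b
  assume eq: "codeword \<Omega> a = codeword \<Omega> b"
  have "V_eval (a - b) P = 0" if "P \<in> conic xi 1" for P
    using fun_cong[OF eq, of P] that \<open>conic xi 1 \<subseteq> \<Omega>\<close> by (auto simp: codeword_def V_eval_diff)
  then have "a - b = 0"
    by (rule V_eval_vanishing_on_conic_eq_0[OF char card])
  then show "a = b"
    by simp
qed

lemma card_functional_code:
  fixes \<Omega> :: "('a::{finite,field} \<times> 'a) set"
  assumes "inj (codeword \<Omega>)"
  shows "card (functional_code \<Omega>) = CARD('a) ^ 5"
  using assms by (simp add: functional_code_eq_range_codeword card_image eval_nat_numeral)

text \<open>For fixed \<open>y\<close> an element of \<open>V\<close> is a polynomial of degree at most 2 in \<open>x\<close>.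
  When \<open>a3 = 0\<close> it vanishes on a whole line only where \<open>a1 + a4 y = 0\<close>: on at most one line,
  or, if \<open>a1 = a4 = 0\<close>, on at most two lines and nowhere else.\<close>
lemma card_zeros_V_eval_le:
  fixes a :: "'a::{finite,field} \<times> 'a \<times> 'a \<times> 'a \<times> 'a"
  assumes "a \<noteq> 0"
  shows "card {P. V_eval a P = 0} \<le> 2 * CARD('a)"
proof -
  obtain a1 a2 a3 a4 a5 where a: "a = (a1, a2, a3, a4, a5)"
    by (cases a rule: prod_cases5)
  define B where "B y = a1 + a4 * y" for y
  define C where "C y = a2 * y + a5 * y^2" for y
  have V: "V_eval a (x, y) = C y + B y * x + a3 * x^2" for x y
    by (simp add: a B_def C_def algebra_simps)
  have "card {P. V_eval a P = 0} = (\<Sum>y \<in> UNIV. card {x. V_eval a (x, y) = 0})"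
    by (rule card_eq_sum_card_fibres) simp
  also have "\<dots> \<le> 2 * CARD('a)"
  proof (cases "a3 = 0")
    case False
    then have "card {x. V_eval a (x, y) = 0} \<le> 2" for y
      using card_roots_quadratic_le[of "C y" "B y" a3] by (simp add: V)
    then have "(\<Sum>y \<in> UNIV. card {x. V_eval a (x, y) = 0}) \<le> (\<Sum>y \<in> (UNIV :: 'a set). 2)"
      by (intro sum_mono)
    then show ?thesis
      by (simp add: mult.commute)
  next
    case True
    then have "(\<Sum>y \<in> UNIV. card {x. V_eval a (x, y) = 0})
        = (\<Sum>y \<in> UNIV. card {x. C y + B y * x = 0})"
      by (simp add: V)
    also have "\<dots> \<le> card {y. B y \<noteq> 0} + CARD('a) * card {y. B y = 0 \<and> C y = 0}"
      by (rule sum_card_roots_affine_le)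
    also have "\<dots> \<le> 2 * CARD('a)"
    proof (cases "a1 = 0 \<and> a4 = 0")
      case True
      then have "a2 \<noteq> 0 \<or> a5 \<noteq> 0"
        using assms \<open>a3 = 0\<close> by (auto simp: a zero_prod_def)
      then have "card {y. 0 + a2 * y + a5 * y^2 = 0} \<le> 2"
        by (intro card_roots_quadratic_le) auto
      then show ?thesis
        using True by (simp add: B_def C_def)
    next
      case False
      then have "card {y. B y = 0} \<le> 1"
        using card_roots_linear_le[of a1 a4] by (auto simp: B_def)
      moreover have "card {y. B y = 0 \<and> C y = 0} \<le> card {y. B y = 0}"
        by (rule card_mono) auto
      moreover have "card {y. B y \<noteq> 0} \<le> CARD('a)"
        by (rule card_mono) auto
      ultimately have "CARD('a) * card {y. B y = 0 \<and> C y = 0} \<le> CARD('a) * 1"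
        and "card {y. B y \<noteq> 0} \<le> CARD('a)"
        by (meson le_trans mult_le_mono2)+
      then show ?thesis
        by linarith
    qed
    finally show ?thesis .
  qed
  finally show ?thesis .
qed

lemma hweight_codeword_ge:
  fixes \<Omega> :: "('a::{finite,field} \<times> 'a) set"
  shows "card \<Omega> - card {P. V_eval a P = 0} \<le> hweight \<Omega> (codeword \<Omega> a)"
proof -
  have "{P \<in> \<Omega>. codeword \<Omega> a P \<noteq> 0} = \<Omega> - {P. V_eval a P = 0}"
    by (auto simp: codeword_def)
  then show ?thesis
    by (simp add: hweight_def diff_card_le_card_Diff)
qed

lemma le_min_distance:
  assumes "finite C" and "C - {\<lambda>_. 0} \<noteq> {}"
    and "\<And>w. w \<in> C - {\<lambda>_. 0} \<Longrightarrow> d \<le> hweight \<Omega> w"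
  shows "d \<le> min_distance \<Omega> C"
  using assms by (simp add: min_distance_def)

lemma min_distance_functional_code_ge:
  fixes \<Omega> :: "('a::{finite,field} \<times> 'a) set"
  assumes "inj (codeword \<Omega>)"
  shows "card \<Omega> - 2 * CARD('a) \<le> min_distance \<Omega> (functional_code \<Omega>)"
proof (rule le_min_distance)
  show "finite (functional_code \<Omega>)"
    by (simp add: functional_code_eq_range_codeword)
  have "codeword \<Omega> (1, 0, 0, 0, 0) \<noteq> codeword \<Omega> 0"
    using assms by (auto dest: injD simp: zero_prod_def)
  then show "functional_code \<Omega> - {\<lambda>_. 0} \<noteq> {}"
    by (auto simp: functional_code_eq_range_codeword codeword_0)
next
  fix w
  assume "w \<in> functional_code \<Omega> - {\<lambda>_. 0}"
  then obtain a where w: "w = codeword \<Omega> a" and "w \<noteq> (\<lambda>_. 0)"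
    by (auto simp: functional_code_eq_range_codeword)
  then have "a \<noteq> 0"
    using codeword_0 by auto
  have "card \<Omega> - 2 * CARD('a) \<le> card \<Omega> - card {P. V_eval a P = 0}"
    using card_zeros_V_eval_le[OF \<open>a \<noteq> 0\<close>] by (rule diff_le_mono2)
  also have "\<dots> \<le> hweight \<Omega> w"
    unfolding w by (rule hweight_codeword_ge)
  finally show "card \<Omega> - 2 * CARD('a) \<le> hweight \<Omega> w" .
qed

theorem corollary2:
  fixes n :: nat and xi :: "'a::{finite, field}"
  assumes q: "CARD('a) = 2 ^ (4 * n + 2)"
    and xi: "xi^2 + xi + 1 = 0"
  shows "card (Omega_star (2 ^ (2 * n + 1)) xi) = (2 ^ (2 * n + 1) - 1) * (CARD('a) + 1)
       \<and> card (functional_code (Omega_star (2 ^ (2 * n + 1)) xi)) = CARD('a) ^ 5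
       \<and> int (min_distance (Omega_star (2 ^ (2 * n + 1)) xi)
                (functional_code (Omega_star (2 ^ (2 * n + 1)) xi)))
           \<ge> int (card (Omega_star (2 ^ (2 * n + 1)) xi))
              - (2 * int CARD('a) + 2 + 20 * 2 ^ (2 * n + 1))"
proof -
  define \<Omega> where "\<Omega> = Omega_star (2 ^ (2 * n + 1)) xi"
  have char: "CHAR('a) = 2"
    using q by (rule CHAR_eq_2_if_card_power_2)
  have q_square: "CARD('a) = 2 ^ (2 * n + 1) * 2 ^ (2 * n + 1)"
    by (simp add: q flip: power_add)
  have aniso: "conic xi 0 = {(0, 0)}"
    using no_root_of_T2_T_xi[OF q xi] by (rule conic_0_eq_if_no_root)
  have "(4::nat) \<le> CARD('a)"
    using q by (simp add: power_add)
  then have "card (conic xi 1) \<ge> 5"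
    using card_conic[OF char aniso] by simp
  moreover have "conic xi 1 \<subseteq> \<Omega>"
    unfolding \<Omega>_def Omega_star_eq_Union_conic by (rule UN_upper) (simp add: subfield_of_order_def)
  ultimately have inj: "inj (codeword \<Omega>)"
    by (rule inj_codeword[OF char])
  have "int (card \<Omega>) - 2 * int CARD('a) \<le> int (min_distance \<Omega> (functional_code \<Omega>))"
    using min_distance_functional_code_ge[OF inj] by linarith
  moreover have "(0::int) \<le> 2 ^ (2 * n + 1)"
    by simp
  ultimately show ?thesis
    using card_Omega_star[OF char q_square aniso] card_functional_code[OF inj]
    unfolding \<Omega>_def[symmetric] by linarith
qed

end
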